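(* Let $\alpha>0$, $\epsilon\in(0,1/2)$, consider Poisson percolation on $\mathbb{Z}^2$, let $n=n(p_c+\epsilon,t)$ and let $C_1>0$ be a constant. Then, as $t\to\infty$, the probability that there exists an edge inside the square $[-C_1\log n, C_1\log n]^2$ that is closed at time $t$ tends to $0$.
   Context: Poisson percolation: each nearest-neighbour edge of $\mathbb{Z}^2$ with midpoint $x$ is assigned an independent Poisson process of rate $\|x\|^{-\alpha}$, where $\|x\|=\max\{|x_1|,|x_2|\}$; the edge becomes open at the time of its first arrival (closed before it), so at time $t$ the edge with midpoint $x$ is open with probability $1-\exp(-t\|x\|^{-\alpha})$, independently over edges. $p_c=1/2$ and $n(p,t)=c_{p,\alpha}t^{1/\alpha}$ with $c_{p,\alpha}=(-\log(1-p))^{-1/\alpha}$. *)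

theory Defs
  imports "HOL-Probability.Probability"
begin

text \<open>Nearest-neighbour edges of Z^2: (z, True) is the horizontal edge from z to z + (1,0),
  (z, False) is the vertical edge from z to z + (0,1). Every edge has exactly one such name.\<close>
type_synonym edge = "(int \<times> int) \<times> bool"

definition edge_endpoints :: "edge \<Rightarrow> (int \<times> int) set" where
  "edge_endpoints e = (case e of ((a, b), h) \<Rightarrow>
      {(a, b), (if h then (a + 1, b) else (a, b + 1))})"

definition edge_midpoint :: "edge \<Rightarrow> real \<times> real" where
  "edge_midpoint e = (case e of ((a, b), h) \<Rightarrow>
      (if h then (real_of_int a + 1/2, real_of_int b) else (real_of_int a, real_of_int b + 1/2)))"

definition supnorm :: "real \<times> real \<Rightarrow> real" where
  "supnorm x = max \<bar>fst x\<bar> \<bar>snd x\<bar>"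

definition edge_rate :: "real \<Rightarrow> edge \<Rightarrow> real" where
  "edge_rate \<alpha> e = supnorm (edge_midpoint e) powr (- \<alpha>)"

definition edge_in_square :: "real \<Rightarrow> edge \<Rightarrow> bool" where
  "edge_in_square r e = (\<forall>z \<in> edge_endpoints e.
      \<bar>real_of_int (fst z)\<bar> \<le> r \<and> \<bar>real_of_int (snd z)\<bar> \<le> r)"

definition p_c :: real where "p_c = 1/2"

definition c_const :: "real \<Rightarrow> real \<Rightarrow> real" where
  "c_const p \<alpha> = (- ln (1 - p)) powr (- 1 / \<alpha>)"

definition n_fun :: "real \<Rightarrow> real \<Rightarrow> real \<Rightarrow> real" where
  "n_fun \<alpha> p t = c_const p \<alpha> * t powr (1 / \<alpha>)"

end

theory Submission
  imports Defs "HOL-Real_Asymp.Real_Asymp"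
begin

text \<open>A union bound suffices. Every edge in the square
  of radius \<open>r\<close> has a midpoint of sup norm in \<open>(0, r]\<close>, hence rate at least \<open>r\<^sup>-\<^sup>\<alpha>\<close>, so it is
  still closed at time \<open>t\<close> with probability at most \<open>exp (- t r\<^sup>-\<^sup>\<alpha>)\<close>. There are at most
  \<open>2 (2 r + 1)\<^sup>2\<close> such edges, and for \<open>r = C\<^sub>1 log n \<asymp> log t\<close> the factor \<open>exp (- t r\<^sup>-\<^sup>\<alpha>)\<close>
  decays faster than any power of \<open>r\<close>.\<close>

lemma edges_in_square_subset:
  "{e. edge_in_square r e} \<subseteq> ({-\<lfloor>r\<rfloor>..\<lfloor>r\<rfloor>} \<times> {-\<lfloor>r\<rfloor>..\<lfloor>r\<rfloor>}) \<times> UNIV"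
proof
  fix e assume "e \<in> {e. edge_in_square r e}"
  moreover obtain a b h where e: "e = ((a, b), h)" by (metis prod.exhaust)
  ultimately have "\<bar>real_of_int a\<bar> \<le> r" "\<bar>real_of_int b\<bar> \<le> r"
    by (auto simp: edge_in_square_def edge_endpoints_def)
  then have "\<bar>a\<bar> \<le> \<lfloor>r\<rfloor>" "\<bar>b\<bar> \<le> \<lfloor>r\<rfloor>" by (simp_all add: le_floor_iff)
  then show "e \<in> ({-\<lfloor>r\<rfloor>..\<lfloor>r\<rfloor>} \<times> {-\<lfloor>r\<rfloor>..\<lfloor>r\<rfloor>}) \<times> UNIV" using e by auto
qed

lemma finite_edges_in_square: "finite {e. edge_in_square r e}"
  by (rule finite_subset[OF edges_in_square_subset]) simp

lemma card_edges_in_square_le: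
  assumes "0 \<le> r"
  shows "real (card {e. edge_in_square r e}) \<le> 2 * (2 * r + 1)\<^sup>2"
proof -
  define S where "S = ({-\<lfloor>r\<rfloor>..\<lfloor>r\<rfloor>} \<times> {-\<lfloor>r\<rfloor>..\<lfloor>r\<rfloor>}) \<times> (UNIV :: bool set)"
  have floor_nonneg: "0 \<le> \<lfloor>r\<rfloor>" using assms by simp
  have "card {e. edge_in_square r e} \<le> card S"
    unfolding S_def by (intro card_mono edges_in_square_subset) simp
  then have "real (card {e. edge_in_square r e}) \<le> real (card S)" by simp
  also have "\<dots> = 2 * (2 * real_of_int \<lfloor>r\<rfloor> + 1)\<^sup>2"
    using floor_nonneg by (simp add: S_def card_cartesian_product power2_eq_square of_nat_nat)
  also have "\<dots> \<le> 2 * (2 * r + 1)\<^sup>2"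
    using floor_nonneg by (simp add: power_mono)
  finally show ?thesis .
qed

lemma half_le_abs_add_half: "1/2 \<le> \<bar>real_of_int a + 1/2\<bar>"
  by (cases "a \<ge> 0") (simp_all add: abs_if)

lemma supnorm_edge_midpoint_pos: "0 < supnorm (edge_midpoint e)"
proof -
  obtain a b h where e: "e = ((a, b), h)" by (metis prod.exhaust)
  have "1/2 \<le> supnorm (edge_midpoint e)"
    using half_le_abs_add_half[of a] half_le_abs_add_half[of b]
    by (auto simp: e edge_midpoint_def supnorm_def le_max_iff_disj)
  then show ?thesis by linarith
qed

lemma supnorm_edge_midpoint_le:
  assumes "edge_in_square r e"
  shows "supnorm (edge_midpoint e) \<le> r"
proof -
  obtain a b h where e: "e = ((a, b), h)" by (metis prod.exhaust)
  have a: "\<bar>real_of_int a\<bar> \<le> r" and b: "\<bar>real_of_int b\<bar> \<le> r"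
    using assms by (auto simp: e edge_in_square_def edge_endpoints_def)
  show ?thesis
  proof (cases h)
    case True
    then have "\<bar>real_of_int a + 1\<bar> \<le> r"
      using assms by (auto simp: e edge_in_square_def edge_endpoints_def)
    then show ?thesis using a b True by (simp add: e edge_midpoint_def supnorm_def)
  next
    case False
    then have "\<bar>real_of_int b + 1\<bar> \<le> r"
      using assms by (auto simp: e edge_in_square_def edge_endpoints_def)
    then show ?thesis using a b False by (simp add: e edge_midpoint_def supnorm_def)
  qed
qed

lemma edge_rate_pos: "0 < edge_rate \<alpha> e"
  using supnorm_edge_midpoint_pos[of e] by (simp add: edge_rate_def)

lemma edge_rate_ge_if_in_square:
  assumes "edge_in_square r e" and "0 \<le> \<alpha>"
  shows "r powr (- \<alpha>) \<le> edge_rate \<alpha> e"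
  unfolding edge_rate_def
  using assms supnorm_edge_midpoint_pos supnorm_edge_midpoint_le
  by (intro powr_mono2') auto

lemma (in prob_space) prob_some_exponential_gt_le:
  assumes "finite E"
    and distr: "\<And>e. e \<in> E \<Longrightarrow> distributed M lborel (T e) (exponential_density (l e))"
    and rate: "\<And>e. e \<in> E \<Longrightarrow> 0 < l e \<and> m \<le> l e"
    and "0 \<le> t"
  shows "prob {\<omega> \<in> space M. \<exists>e\<in>E. t < T e \<omega>} \<le> card E * exp (- t * m)"
proof -
  have sets: "{\<omega> \<in> space M. t < T e \<omega>} \<in> events" if "e \<in> E" for e
  proof -
    have "T e \<in> borel_measurable M" using distributed_measurable[OF distr[OF that]] by simp
    then show ?thesis by measurable
  qed
  have tail: "prob {\<omega> \<in> space M. t < T e \<omega>} \<le> exp (- t * m)" if "e \<in> E" for e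
  proof -
    have "prob {\<omega> \<in> space M. t < T e \<omega>} = exp (- t * l e)"
      using exponential_distributedD_gt[OF distr[OF that] \<open>0 \<le> t\<close>] rate[OF that] by simp
    also have "\<dots> \<le> exp (- t * m)"
      using rate[OF that] \<open>0 \<le> t\<close> by (simp add: mult_left_mono)
    finally show ?thesis .
  qed
  have "{\<omega> \<in> space M. \<exists>e\<in>E. t < T e \<omega>} = (\<Union>e\<in>E. {\<omega> \<in> space M. t < T e \<omega>})" by auto
  then have "prob {\<omega> \<in> space M. \<exists>e\<in>E. t < T e \<omega>} \<le> (\<Sum>e\<in>E. prob {\<omega> \<in> space M. t < T e \<omega>})"
    using measure_UNION_le[OF \<open>finite E\<close> sets] by simp
  also have "\<dots> \<le> (\<Sum>e\<in>E. exp (- t * m))" by (rule sum_mono) (rule tail)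
  finally show ?thesis by simp
qed

lemma (in prob_space) prob_closed_edge_in_square_le:
  assumes "0 < \<alpha>" and "0 \<le> r" and "0 \<le> t"
    and distr: "\<And>e. distributed M lborel (T e) (exponential_density (edge_rate \<alpha> e))"
  shows "prob {\<omega> \<in> space M. \<exists>e. edge_in_square r e \<and> t < T e \<omega>}
           \<le> 2 * (2 * r + 1)\<^sup>2 * exp (- t * r powr (- \<alpha>))"
proof -
  let ?E = "{e. edge_in_square r e}"
  have "{\<omega> \<in> space M. \<exists>e. edge_in_square r e \<and> t < T e \<omega>} = {\<omega> \<in> space M. \<exists>e\<in>?E. t < T e \<omega>}"
    by blast
  also have "prob \<dots> \<le> card ?E * exp (- t * r powr (- \<alpha>))"
  proof (rule prob_some_exponential_gt_le[OF finite_edges_in_square distr _ \<open>0 \<le> t\<close>])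
    show "0 < edge_rate \<alpha> e \<and> r powr (- \<alpha>) \<le> edge_rate \<alpha> e" if "e \<in> ?E" for e
      using that \<open>0 < \<alpha>\<close> edge_rate_pos edge_rate_ge_if_in_square by simp
  qed
  also have "\<dots> \<le> 2 * (2 * r + 1)\<^sup>2 * exp (- t * r powr (- \<alpha>))"
    using card_edges_in_square_le \<open>0 \<le> r\<close> by (intro mult_right_mono) auto
  finally show ?thesis .
qed

lemma edge_count_times_tail_tendsto_zero:
  fixes \<alpha> c C :: real
  assumes "0 < \<alpha>" and "0 < c" and "0 < C"
  defines "r \<equiv> \<lambda>t. C * ln (c * t powr (1 / \<alpha>))"
  shows "((\<lambda>t. 2 * (2 * r t + 1)\<^sup>2 * exp (- t * r t powr (- \<alpha>))) \<longlongrightarrow> 0) at_top"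
  unfolding r_def using assms by real_asymp

theorem lemma2:
  fixes \<alpha> \<epsilon> C\<^sub>1 :: real
    and M :: "'a measure"
    and T :: "edge \<Rightarrow> 'a \<Rightarrow> real"
  assumes "\<alpha> > 0" and "0 < \<epsilon>" and "\<epsilon> < 1/2" and "C\<^sub>1 > 0"
    and "prob_space M"
    and "prob_space.indep_vars M (\<lambda>_. borel) T UNIV"
    and "\<And>e. distributed M lborel (T e) (exponential_density (edge_rate \<alpha> e))"
  shows "((\<lambda>t. measure M {\<omega> \<in> space M. \<exists>e. edge_in_square (C\<^sub>1 * ln (n_fun \<alpha> (p_c + \<epsilon>) t)) e
                                              \<and> t < T e \<omega>}) \<longlongrightarrow> 0) at_top"
proof -
  interpret prob_space M by fact
  define c where "c = c_const (p_c + \<epsilon>) \<alpha>"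
  have "0 < c" using assms(2,3) by (simp add: c_def c_const_def p_c_def)
  define r where "r t = C\<^sub>1 * ln (c * t powr (1 / \<alpha>))" for t
  have r_eq: "C\<^sub>1 * ln (n_fun \<alpha> (p_c + \<epsilon>) t) = r t" for t
    by (simp add: r_def n_fun_def c_def)
  have "filterlim r at_top at_top"
    unfolding r_def using assms(1,4) \<open>0 < c\<close> by real_asymp
  then have "eventually (\<lambda>t. 0 \<le> r t \<and> 0 \<le> t) at_top"
    using eventually_ge_at_top[of 0] by (intro eventually_conj) (simp_all add: filterlim_at_top)
  then have upper: "eventually (\<lambda>t. prob {\<omega> \<in> space M. \<exists>e. edge_in_square (r t) e \<and> t < T e \<omega>}
      \<le> 2 * (2 * r t + 1)\<^sup>2 * exp (- t * r t powr (- \<alpha>))) at_top"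
    by eventually_elim (use prob_closed_edge_in_square_le assms(1,7) in blast)
  have bound_lim: "((\<lambda>t. 2 * (2 * r t + 1)\<^sup>2 * exp (- t * r t powr (- \<alpha>))) \<longlongrightarrow> 0) at_top"
    unfolding r_def using edge_count_times_tail_tendsto_zero[OF assms(1) \<open>0 < c\<close> assms(4)] .
  show ?thesis
    unfolding r_eq by (rule tendsto_sandwich[OF _ upper tendsto_const bound_lim]) simp
qed

end
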